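(* Let $M \ge 1$ and $K \ge 1$ be integers, and for each document $j \in \{1,\dots,M\}$ and topic $i \in \{1,\dots,K\}$ let $n_{j\cdot}^i \in \{0,1,2,\dots\}$ be fixed, with $N_j = \sum_{i=1}^K n_{j\cdot}^i$. Let $K_{j+} = |\{ i : n_{j\cdot}^i > 0\}|$. For $\alpha > 0$ define \[ p(\mathbf{Z} \mid \alpha) = \prod_{j=1}^M \frac{\Gamma(\alpha K)}{\Gamma\big(\sum_{i=1}^K n_{j\cdot}^i + \alpha K\big)} \prod_{i=1}^K \frac{\Gamma(n_{j\cdot}^i + \alpha)}{\Gamma(\alpha)}. \] Fix $\lambda > 0$ and set $\alpha = \exp(-\lambda \eta)$. Then, as $\eta \to \infty$, \[ -\log p(\mathbf{Z} \mid \alpha) \sim \eta \lambda \sum_{j=1}^M (K_{j+} - 1). \]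
   Context: Here $\mathbf{Z}$ denotes a fixed assignment of word tokens in $M$ documents to $K$ topics, and $n_{j\cdot}^i$ is the number of tokens in document $j$ assigned to topic $i$; $p(\mathbf{Z}\mid\alpha)$ is the Dirichlet-multinomial likelihood of these assignments under a symmetric Dirichlet$(\alpha)$ prior on per-document topic proportions. The notation $f(\eta) \sim g(\eta)$ means $f(\eta)/g(\eta) \to 1$ as $\eta \to \infty$. *)

theory Defs
  imports "HOL-Analysis.Analysis" "HOL-Library.Landau_Symbols"
begin

text \<open>Counts: n j i = number of tokens of document j (1..M) assigned to topic i (1..K).\<close>

definition doc_len :: "nat \<Rightarrow> (nat \<Rightarrow> nat \<Rightarrow> nat) \<Rightarrow> nat \<Rightarrow> nat" where
  "doc_len K n j = (\<Sum>i=1..K. n j i)"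

definition Kplus :: "nat \<Rightarrow> (nat \<Rightarrow> nat \<Rightarrow> nat) \<Rightarrow> nat \<Rightarrow> nat" where
  "Kplus K n j = card {i \<in> {1..K}. n j i > 0}"

definition lik :: "nat \<Rightarrow> nat \<Rightarrow> (nat \<Rightarrow> nat \<Rightarrow> nat) \<Rightarrow> real \<Rightarrow> real" where
  "lik M K n \<alpha> = (\<Prod>j=1..M. Gamma (\<alpha> * real K) / Gamma (real (doc_len K n j) + \<alpha> * real K)
        * (\<Prod>i=1..K. Gamma (real (n j i) + \<alpha>) / Gamma \<alpha>))"

end

theory Submission
  imports Defs "HOL-Real_Asymp.Real_Asymp"
begin

text \<open>Since \<open>\<Gamma>(x + 1) = x \<Gamma>(x)\<close>, every topic occurring in document \<open>j\<close> contributes a factor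
  \<open>\<alpha>\<close> to the document's likelihood, and \<open>\<Gamma>(\<alpha>K)\<close> absorbs one of them; what remains
  (\<open>dirichlet_mult_regular\<close>) is continuous and positive at \<open>\<alpha> = 0\<close>. Hence
  \<open>p(Z | \<alpha>) = \<alpha>^S G(\<alpha>)\<close> with \<open>S = \<Sum>\<^sub>j (K\<^sub>j\<^sub>+ - 1)\<close> and \<open>G(0) > 0\<close>, so
  \<open>-log p = \<lambda>\<eta>S - log G(exp(-\<lambda>\<eta>))\<close> and the second term stays bounded.\<close>

lemma neg_ln_power_mult_regular_asymp_equiv:
  fixes f G :: "real \<Rightarrow> real" and S :: nat and lam :: real
  assumes "lam > 0" and "S > 0"
    and factor: "\<And>a. a > 0 \<Longrightarrow> f a = a ^ S * G a"
    and G_pos: "\<And>a. a > 0 \<Longrightarrow> G a > 0"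
    and "isCont G 0" and "G 0 > 0"
  shows "(\<lambda>\<eta>. - ln (f (exp (- lam * \<eta>)))) \<sim>[at_top] (\<lambda>\<eta>. \<eta> * lam * real S)"
proof -
  have neg_ln: "- ln (f (exp (- lam * \<eta>))) = \<eta> * lam * real S + - ln (G (exp (- lam * \<eta>)))"
    for \<eta>
  proof -
    have "G (exp (- lam * \<eta>)) > 0" by (rule G_pos) simp
    then show ?thesis by (simp add: factor ln_mult ln_realpow)
  qed
  have "((\<lambda>\<eta>. exp (- lam * \<eta>)) \<longlongrightarrow> 0) at_top"
    using \<open>lam > 0\<close> by real_asymp
  then have "((\<lambda>\<eta>. - ln (G (exp (- lam * \<eta>)))) \<longlongrightarrow> - ln (G 0)) at_top"
    using \<open>G 0 > 0\<close> by (intro tendsto_minus tendsto_ln isCont_tendsto_compose[OF \<open>isCont G 0\<close>]) auto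
  moreover have "filterlim (\<lambda>\<eta>. \<eta> * lam * real S) at_infinity at_top"
    using \<open>lam > 0\<close> \<open>S > 0\<close> by real_asymp
  ultimately have "(\<lambda>\<eta>. - ln (G (exp (- lam * \<eta>)))) \<in> o[at_top](\<lambda>\<eta>. \<eta> * lam * real S)"
    using \<open>lam > 0\<close> \<open>S > 0\<close>
    by (intro smalloI_tendsto tendsto_divide_0) (auto intro: eventually_mono[OF eventually_gt_at_top[of 0]])
  then show ?thesis
    unfolding neg_ln by (subst asymp_equiv_add_right) auto
qed

lemma pos_not_in_nonpos_Ints: "(x::real) > 0 \<Longrightarrow> x \<notin> \<int>\<^sub>\<le>\<^sub>0"
  using nonpos_Ints_nonpos by fastforce

lemma prod_Gamma_ratio_eq_power_support:
  fixes c :: "nat \<Rightarrow> nat" and a :: real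
  assumes "a > 0" and "finite I"
  shows "(\<Prod>i\<in>I. Gamma (real (c i) + a) / Gamma a)
       = a ^ card {i\<in>I. c i > 0} * (\<Prod>i\<in>{i\<in>I. c i > 0}. Gamma (real (c i) + a) / Gamma (a + 1))"
proof -
  let ?P = "{i\<in>I. c i > 0}"
  have Gamma_a: "Gamma a \<noteq> 0" using \<open>a > 0\<close> by (metis Gamma_real_pos less_irrefl)
  have Gamma_a1: "Gamma (a + 1) = a * Gamma a"
    using Gamma_plus1[OF pos_not_in_nonpos_Ints[OF \<open>a > 0\<close>]] .
  have "(\<Prod>i\<in>I. Gamma (real (c i) + a) / Gamma a)
      = (\<Prod>i\<in>I - ?P. Gamma (real (c i) + a) / Gamma a) * (\<Prod>i\<in>?P. Gamma (real (c i) + a) / Gamma a)"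
    using \<open>finite I\<close> by (intro prod.subset_diff) auto
  also have "(\<Prod>i\<in>I - ?P. Gamma (real (c i) + a) / Gamma a) = 1"
    using Gamma_a by (intro prod.neutral) auto
  also have "(\<Prod>i\<in>?P. Gamma (real (c i) + a) / Gamma a)
      = (\<Prod>i\<in>?P. a * (Gamma (real (c i) + a) / Gamma (a + 1)))"
    using \<open>a > 0\<close> Gamma_a by (intro prod.cong) (auto simp: Gamma_a1)
  also have "\<dots> = a ^ card ?P * (\<Prod>i\<in>?P. Gamma (real (c i) + a) / Gamma (a + 1))"
    by (simp only: prod.distrib prod_constant)
  finally show ?thesis by simp
qed

lemma support_nonempty_if_sum_pos:
  fixes c :: "'a \<Rightarrow> nat"
  assumes "(\<Sum>i\<in>I. c i) > 0"
  shows "{i\<in>I. c i > 0} \<noteq> {}"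
proof
  assume "{i\<in>I. c i > 0} = {}"
  then have "(\<Sum>i\<in>I. c i) = 0" by (intro sum.neutral) auto
  with assms show False by simp
qed

definition dirichlet_mult_regular :: "nat \<Rightarrow> (nat \<Rightarrow> nat) \<Rightarrow> real \<Rightarrow> real" where
  "dirichlet_mult_regular K c a =
     Gamma (a * real K + 1) / (real K * Gamma (real (\<Sum>i=1..K. c i) + a * real K))
     * (\<Prod>i\<in>{i\<in>{1..K}. c i > 0}. Gamma (real (c i) + a) / Gamma (a + 1))"

lemma dirichlet_mult_factor_eq:
  fixes c :: "nat \<Rightarrow> nat" and a :: real
  assumes "a > 0" and "K \<ge> 1" and "(\<Sum>i=1..K. c i) > 0"
  shows "Gamma (a * real K) / Gamma (real (\<Sum>i=1..K. c i) + a * real K)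
           * (\<Prod>i=1..K. Gamma (real (c i) + a) / Gamma a)
         = a ^ (card {i\<in>{1..K}. c i > 0} - 1) * dirichlet_mult_regular K c a"
proof -
  let ?P = "{i\<in>{1..K}. c i > 0}"
  have "?P \<noteq> {}" using support_nonempty_if_sum_pos \<open>(\<Sum>i=1..K. c i) > 0\<close> .
  then have card_P: "card ?P = Suc (card ?P - 1)" by (simp add: card_gt_0_iff)
  have "a * real K > 0" using \<open>a > 0\<close> \<open>K \<ge> 1\<close> by simp
  then have Gamma_aK: "Gamma (a * real K) = Gamma (a * real K + 1) / (a * real K)"
    using Gamma_plus1[OF pos_not_in_nonpos_Ints] by simp
  show ?thesis
    unfolding prod_Gamma_ratio_eq_power_support[OF \<open>a > 0\<close> finite_atLeastAtMost] Gamma_aK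
      dirichlet_mult_regular_def
    using \<open>a > 0\<close> \<open>K \<ge> 1\<close> by (subst card_P) (simp add: field_simps)
qed

lemma dirichlet_mult_regular_pos:
  assumes "a \<ge> 0" and "K \<ge> 1" and "(\<Sum>i=1..K. c i) > 0"
  shows "dirichlet_mult_regular K c a > 0"
proof -
  define N where "N = real (\<Sum>i=1..K. c i)"
  have "N > 0" unfolding N_def using assms(3) by (simp only: of_nat_0_less_iff)
  have "(\<Prod>i\<in>{i\<in>{1..K}. c i > 0}. Gamma (real (c i) + a) / Gamma (a + 1)) > 0"
    using \<open>a \<ge> 0\<close> by (intro prod_pos divide_pos_pos Gamma_real_pos) auto
  moreover have "a * real K \<ge> 0" using \<open>a \<ge> 0\<close> by simp
  then have "Gamma (a * real K + 1) > 0" "Gamma (N + a * real K) > 0"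
    using \<open>N > 0\<close> by (simp_all add: Gamma_real_pos)
  ultimately show ?thesis
    unfolding dirichlet_mult_regular_def N_def[symmetric] using \<open>K \<ge> 1\<close> by simp
qed

lemma isCont_dirichlet_mult_regular_0:
  assumes "K \<ge> 1" and "(\<Sum>i=1..K. c i) > 0"
  shows "isCont (dirichlet_mult_regular K c) 0"
proof -
  define N where "N = real (\<Sum>i=1..K. c i)"
  have "N > 0" unfolding N_def using assms(2) by (simp only: of_nat_0_less_iff)
  then show ?thesis
    unfolding dirichlet_mult_regular_def[abs_def] N_def[symmetric]
    using assms(1) pos_not_in_nonpos_Ints[OF \<open>N > 0\<close>]
    by (auto intro!: continuous_intros simp: Gamma_eq_zero_iff)
qed

lemma lik_eq_power_mult_regular:
  assumes "a > 0" and "K \<ge> 1" and "\<forall>j\<in>{1..M}. doc_len K n j \<ge> 1"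
  shows "lik M K n a = a ^ (\<Sum>j=1..M. Kplus K n j - 1) * (\<Prod>j=1..M. dirichlet_mult_regular K (n j) a)"
proof -
  have doc_factor: "Gamma (a * real K) / Gamma (real (doc_len K n j) + a * real K)
      * (\<Prod>i=1..K. Gamma (real (n j i) + a) / Gamma a)
      = a ^ (Kplus K n j - 1) * dirichlet_mult_regular K (n j) a" if "j \<in> {1..M}" for j
  proof -
    have "(\<Sum>i=1..K. n j i) > 0" using bspec[OF assms(3) that] by (simp add: doc_len_def)
    then show ?thesis
      unfolding doc_len_def Kplus_def by (rule dirichlet_mult_factor_eq[OF assms(1,2)])
  qed
  have "lik M K n a = (\<Prod>j=1..M. a ^ (Kplus K n j - 1) * dirichlet_mult_regular K (n j) a)"
    unfolding lik_def using doc_factor by (rule prod.cong[OF refl])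
  then show ?thesis by (simp add: power_sum prod.distrib)
qed

theorem lemma1:
  fixes M K :: nat and n :: "nat \<Rightarrow> nat \<Rightarrow> nat" and lam :: real
  assumes "M \<ge> 1" and "K \<ge> 1" and "lam > 0"
    and nonempty_docs: "\<forall>j\<in>{1..M}. doc_len K n j \<ge> 1"
    and nondegenerate: "(\<Sum>j=1..M. real (Kplus K n j) - 1) > 0"
  shows "(\<lambda>\<eta>. - ln (lik M K n (exp (- lam * \<eta>))))
           \<sim>[at_top] (\<lambda>\<eta>. \<eta> * lam * (\<Sum>j=1..M. real (Kplus K n j) - 1))"
proof -
  define S where "S = (\<Sum>j=1..M. Kplus K n j - 1)"
  define G where "G = (\<lambda>a. \<Prod>j=1..M. dirichlet_mult_regular K (n j) a)"
  have "Kplus K n j \<ge> 1" if "j \<in> {1..M}" for j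
    using nonempty_docs that support_nonempty_if_sum_pos[of "n j" "{1..K}"]
    by (auto simp: Kplus_def doc_len_def Suc_le_eq card_gt_0_iff)
  then have real_S: "real S = (\<Sum>j=1..M. real (Kplus K n j) - 1)"
    unfolding S_def of_nat_sum by (intro sum.cong) (auto simp: of_nat_diff)
  have G_pos: "G a > 0" if "a \<ge> 0" for a
    unfolding G_def using that \<open>K \<ge> 1\<close> nonempty_docs
    by (auto intro!: prod_pos dirichlet_mult_regular_pos simp: doc_len_def)
  have "(\<lambda>\<eta>. - ln (lik M K n (exp (- lam * \<eta>)))) \<sim>[at_top] (\<lambda>\<eta>. \<eta> * lam * real S)"
  proof (rule neg_ln_power_mult_regular_asymp_equiv)
    show "S > 0" using nondegenerate real_S by simp
    show "lik M K n a = a ^ S * G a" if "a > 0" for a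
      unfolding S_def G_def using lik_eq_power_mult_regular that \<open>K \<ge> 1\<close> nonempty_docs .
    show "isCont G 0"
      unfolding G_def using \<open>K \<ge> 1\<close> nonempty_docs
      by (auto intro!: continuous_intros isCont_dirichlet_mult_regular_0 simp: doc_len_def)
  qed (use \<open>lam > 0\<close> G_pos in auto)
  then show ?thesis by (simp only: real_S)
qed

end
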